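(* Let $\mathbb{K}$ be a field and let $\mathcal F=(f_1,\dots,f_t)$, $t\ge2$, be polynomials in $\mathbb{K}[x,y]$ of $y$-degree at most $d_y$ generating an ideal $I$ of dimension zero. Write $f_i=\sum_{j=0}^{d_y} f_{i,j}y^j$ with $f_{i,j}\in\mathbb{K}[x]$. Let $D\ge\Delta(\mathcal F)$ be an integer, and let $\mathbf S=[\mathbf S_1\cdots\mathbf S_t]\in\mathbb{K}[x]^{(d_y+D)\times tD}$, where $\mathbf S_i\in\mathbb{K}[x]^{(d_y+D)\times D}$ is the matrix whose $\ell$-th column ($\ell=1,\dots,D$) has the entries $f_{i,d_y},f_{i,d_y-1},\dots,f_{i,0}$ in rows $\ell,\ell+1,\dots,\ell+d_y$ and zeros elsewhere (equivalently, the $\ell$-th column is $\pi_{d_y+D}(y^{D-\ell}f_i)$). Let $c_1,\dots,c_K$ be the nonzero columns of the Hermite normal form $\mathbf H$ of $\mathbf S$. Then there exists $K'\le K$ such that $\pi_{d_y+D}^{-1}(c_{K'})$ is monic in $y$ (i.e., its coefficient of highest power of $y$ is $1$); and, with $K'$ the largest such integer, $\pi_{d_y+D}^{-1}(c_K),\pi_{d_y+D}^{-1}(c_{K-1}),\dots,\pi_{d_y+D}^{-1}(c_{K'})$ is the detaching basis of $I$ in degree $n_0$ (namely $\pi_{d_y+D}^{-1}(c_{K-i})=A_i$ for $i=0,\dots,n_0$).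
   Context: Let $\mathbb{K}$ be a field. For an ideal $I\subseteq\mathbb{K}[x,y]$, let $\mathcal G=(g_0,\dots,g_s)$ be its reduced minimal Gröbner basis for the lexicographic order with $x\prec y$, listed in decreasing order, and $n_i=\deg_y(g_i)$ (so $n_0>\cdots>n_s$). Define $A_0,A_1,\dots$ recursively: for $0\le i<n_s$, $A_i=0$; if $n_k=i$ for some $k$, $A_i=g_k$; otherwise $A_i$ is obtained from $yA_{i-1}$ by replacing its part of $y$-degree $<i$ by the normal form of that part modulo $\mathcal G$. For $n\ge n_0$, the detaching basis of $I$ in degree $n$ is $(A_{n_s},\dots,A_n)$. For $\mathcal F=(f_1,\dots,f_t)$ generating $I$, $\Delta(\mathcal F)$ is the minimal integer $\Delta$ such that for each $i=n_s,\dots,n_0$ there exist $w_{i,1},\dots,w_{i,t}\in\mathbb{K}[x,y]$, all of $y$-degree less than $\Delta$, with $A_i=\sum_{j=1}^t w_{i,j}f_j$. For $n\ge1$, $\pi_n$ is the $\mathbb{K}[x]$-module isomorphism from $\{f\in\mathbb{K}[x,y]:\deg_y f<n\}$ to $\mathbb{K}[x]^n$ sending $f_0+f_1y+\cdots+f_{n-1}y^{n-1}$ to $[f_{n-1},\dots,f_1,f_0]^\top$. Hermite normal forms are with respect to column operations: the Hermite normal form of $\mathbf S\in\mathbb{K}[x]^{n\times m}$ is the unique matrix $\mathbf H=\mathbf S\mathbf U$, with $\mathbf U\in\mathbb{K}[x]^{m\times m}$ unimodular, such that its nonzero columns are the first ones, it is in lower echelon form (the index of the first nonzero entry, the pivot,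 of each nonzero column strictly increases with the column index), every pivot is monic in $x$, and in the row of each pivot all entries in earlier columns have $x$-degree less than that pivot. *)

theory Defs
  imports "HOL-Computational_Algebra.Polynomial" "Jordan_Normal_Form.Matrix"
begin

text \<open>Bivariate polynomials K[x,y] are represented as 'a poly poly:
  polynomials in the (outer) variable y with coefficients in K[x].
  The monomial x^b y^a is represented by the exponent pair (a, b) = (y-exponent, x-exponent).\<close>

type_synonym 'a bipoly = "'a poly poly"

definition ideal_gen :: "'a::comm_ring_1 bipoly list \<Rightarrow> 'a bipoly set" where
  "ideal_gen F = {p. \<exists>w. p = (\<Sum>j<length F. w j * F ! j)}"

text \<open>Zero-dimensional ideal: proper, with K[x,y]/I finite-dimensional over K.\<close>
definition zero_dim :: "'a::field bipoly set \<Rightarrow> bool" where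
  "zero_dim I \<longleftrightarrow> 1 \<notin> I \<and>
     (\<exists>B. finite B \<and> (\<forall>p. \<exists>c. p - (\<Sum>b\<in>B. [:[:c b:]:] * b) \<in> I))"

definition monomials :: "'a::zero bipoly \<Rightarrow> (nat \<times> nat) set" where
  "monomials p = {(a, b). coeff (coeff p a) b \<noteq> 0}"

text \<open>Leading monomial for lex order with x < y: highest y-degree, then highest x-degree.\<close>
definition lm :: "'a::zero bipoly \<Rightarrow> nat \<times> nat" where
  "lm p = (degree p, degree (lead_coeff p))"

definition lcoeff :: "'a::zero bipoly \<Rightarrow> 'a" where
  "lcoeff p = lead_coeff (lead_coeff p)"

definition mon_dvd :: "nat \<times> nat \<Rightarrow> nat \<times> nat \<Rightarrow> bool" where
  "mon_dvd m n \<longleftrightarrow> fst m \<le> fst n \<and> snd m \<le> snd n"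

definition lex_less :: "nat \<times> nat \<Rightarrow> nat \<times> nat \<Rightarrow> bool" where
  "lex_less m n \<longleftrightarrow> fst m < fst n \<or> (fst m = fst n \<and> snd m < snd n)"

definition reduced_lex_GB :: "'a::field bipoly list \<Rightarrow> 'a bipoly set \<Rightarrow> bool" where
  "reduced_lex_GB G I \<longleftrightarrow>
     G \<noteq> [] \<and> distinct G \<and> set G \<subseteq> I \<and> 0 \<notin> set G \<and>
     (\<forall>f\<in>I. f \<noteq> 0 \<longrightarrow> (\<exists>g\<in>set G. mon_dvd (lm g) (lm f))) \<and>
     (\<forall>g\<in>set G. lcoeff g = 1) \<and>
     (\<forall>g\<in>set G. \<forall>g'\<in>set G. g' \<noteq> g \<longrightarrow> (\<forall>m\<in>monomials g. \<not> mon_dvd (lm g') m)) \<and>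
     (\<forall>i j. i < j \<longrightarrow> j < length G \<longrightarrow> lex_less (lm (G ! j)) (lm (G ! i)))"

definition NF :: "'a::field bipoly list \<Rightarrow> 'a bipoly \<Rightarrow> 'a bipoly" where
  "NF G p = (THE r. p - r \<in> ideal_gen G \<and>
                 (\<forall>m\<in>monomials r. \<forall>g\<in>set G. \<not> mon_dvd (lm g) m))"

definition ytrunc :: "nat \<Rightarrow> 'a::comm_ring_1 bipoly \<Rightarrow> 'a bipoly" where
  "ytrunc i h = (\<Sum>j<i. monom (coeff h j) j)"

definition nS :: "'a::zero bipoly list \<Rightarrow> nat" where
  "nS G = degree (last G)"

definition n0 :: "'a::zero bipoly list \<Rightarrow> nat" where
  "n0 G = degree (G ! 0)"

fun detach :: "'a::field bipoly list \<Rightarrow> nat \<Rightarrow> 'a bipoly" where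
  "detach G 0 =
     (if 0 < nS G then 0
      else if (\<exists>k<length G. degree (G ! k) = 0)
        then G ! (SOME k. k < length G \<and> degree (G ! k) = 0) else 0)"
| "detach G (Suc j) =
     (if Suc j < nS G then 0
      else if (\<exists>k<length G. degree (G ! k) = Suc j)
        then G ! (SOME k. k < length G \<and> degree (G ! k) = Suc j)
      else (let h = monom 1 1 * detach G j
            in (h - ytrunc (Suc j) h) + NF G (ytrunc (Suc j) h)))"

definition Delta :: "'a::field bipoly list \<Rightarrow> 'a bipoly list \<Rightarrow> nat" where
  "Delta F G = (LEAST \<Delta>. \<forall>i\<in>{nS G..n0 G}. \<exists>w.
        (\<forall>j<length F. degree (w j) < \<Delta>) \<and> detach G i = (\<Sum>j<length F. w j * F ! j))"

text \<open>pi_n : f_0 + ... + f_{n-1} y^{n-1} \<mapsto> [f_{n-1},...,f_0]^T (0-indexed rows).\<close>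
definition pi_vec :: "nat \<Rightarrow> 'a::zero bipoly \<Rightarrow> 'a poly vec" where
  "pi_vec n f = vec n (\<lambda>r. coeff f (n - 1 - r))"

definition pi_inv :: "nat \<Rightarrow> 'a::comm_ring_1 poly vec \<Rightarrow> 'a bipoly" where
  "pi_inv n v = (\<Sum>r<n. monom (v $ r) (n - 1 - r))"

text \<open>S = [S_1 ... S_t]; column l (1-based) of S_i is pi_{dy+D}(y^{D-l} f_i).
  0-based column c corresponds to i = c div D + 1, l = c mod D + 1.\<close>
definition S_mat :: "'a::comm_ring_1 bipoly list \<Rightarrow> nat \<Rightarrow> nat \<Rightarrow> 'a poly mat" where
  "S_mat F dy D = mat (dy + D) (length F * D)
     (\<lambda>(r, c). coeff (monom 1 (D - 1 - c mod D) * F ! (c div D)) (dy + D - 1 - r))"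

definition piv :: "'a::zero mat \<Rightarrow> nat \<Rightarrow> nat" where
  "piv H j = (LEAST r. r < dim_row H \<and> H $$ (r, j) \<noteq> 0)"

definition hnf_shape :: "'a::field poly mat \<Rightarrow> bool" where
  "hnf_shape H \<longleftrightarrow> (\<exists>K\<le>dim_col H.
      (\<forall>j<dim_col H. col H j = 0\<^sub>v (dim_row H) \<longleftrightarrow> K \<le> j) \<and>
      (\<forall>j1 j2. j1 < j2 \<longrightarrow> j2 < K \<longrightarrow> piv H j1 < piv H j2) \<and>
      (\<forall>j<K. lead_coeff (H $$ (piv H j, j)) = 1 \<and>
         (\<forall>j'<j. H $$ (piv H j, j') = 0 \<or>
                 degree (H $$ (piv H j, j')) < degree (H $$ (piv H j, j)))))"

definition hermite_nf :: "'a::field poly mat \<Rightarrow> 'a poly mat \<Rightarrow> bool" where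
  "hermite_nf S H \<longleftrightarrow>
     (\<exists>U V. U \<in> carrier_mat (dim_col S) (dim_col S) \<and> V \<in> carrier_mat (dim_col S) (dim_col S) \<and>
        U * V = 1\<^sub>m (dim_col S) \<and> V * U = 1\<^sub>m (dim_col S) \<and> H = S * U) \<and> hnf_shape H"

definition nz_cols :: "'a::zero mat \<Rightarrow> nat" where
  "nz_cols H = card {j. j < dim_col H \<and> col H j \<noteq> 0\<^sub>v (dim_row H)}"

end

theory Submission
  imports Defs "HOL-Library.Product_Lexorder" "Jordan_Normal_Form.Determinant"
begin

text \<open>
  The columns of the Hermite form \<open>H = S U\<close> generate the same \<open>\<bbbK>[x]\<close>-module as the columns
  of \<open>S\<close>; this module lies in \<open>I\<close> and, because \<open>D \<ge> \<Delta>(\<F>)\<close>, contains every element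
  \<open>A\<^sub>i\<close> of the detaching basis.  Writing \<open>A\<^sub>i = \<pi>\<^sup>-\<^sup>1(H v)\<close> and letting \<open>j\<^sub>0\<close> be the first
  index with \<open>v\<^sub>j\<^sub>0 \<noteq> 0\<close>, the echelon shape makes the \<open>y\<close>-degree of \<open>A\<^sub>i\<close> the degree read off
  the pivot row of column \<open>j\<^sub>0\<close> and its \<open>y\<close>-leading coefficient the pivot times \<open>v\<^sub>j\<^sub>0\<close>.
  That coefficient is the \<open>y\<close>-leading coefficient of a Groebner basis element, whose
  \<open>x\<close>-degree is minimal among elements of \<open>I\<close> of that \<open>y\<close>-degree, so \<open>v\<^sub>j\<^sub>0 = 1\<close>.  The lower
  \<open>y\<close>-coefficients of \<open>A\<^sub>i\<close> are reduced modulo the Groebner basis and the off-pivot entries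
  of \<open>H\<close> are reduced modulo the pivots, and both bounds fall below the pivot degrees of later
  columns; hence all other entries of \<open>v\<close> vanish and \<open>A\<^sub>i\<close> is a column of \<open>H\<close>.  Since
  \<open>y\<close>-degrees decrease from \<open>A\<^sub>n\<^sub>0\<close> to \<open>A\<^sub>0\<close> and pivots increase along the columns, \<open>A\<^sub>i\<close> is
  the column \<open>K - i\<close>.  Only \<open>g\<^sub>0\<close>, and hence only \<open>A\<^sub>n\<^sub>0\<close>, is monic in \<open>y\<close>.
\<close>

section \<open>Ideals generated by a list\<close>

lemma ideal_gen_add: "p \<in> ideal_gen F \<Longrightarrow> q \<in> ideal_gen F \<Longrightarrow> p + q \<in> ideal_gen F"
proof -
  assume "p \<in> ideal_gen F" "q \<in> ideal_gen F"
  then obtain w w' where "p = (\<Sum>j<length F. w j * F ! j)" "q = (\<Sum>j<length F. w' j * F ! j)"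
    unfolding ideal_gen_def by auto
  then have "p + q = (\<Sum>j<length F. (w j + w' j) * F ! j)"
    by (simp add: sum.distrib distrib_right)
  then show ?thesis unfolding ideal_gen_def by (intro CollectI exI)
qed

lemma ideal_gen_mult: "p \<in> ideal_gen F \<Longrightarrow> c * p \<in> ideal_gen F"
proof -
  assume "p \<in> ideal_gen F"
  then obtain w where "p = (\<Sum>j<length F. w j * F ! j)"
    unfolding ideal_gen_def by auto
  then have "c * p = (\<Sum>j<length F. (c * w j) * F ! j)"
    by (simp add: sum_distrib_left mult.assoc)
  then show ?thesis unfolding ideal_gen_def by (intro CollectI exI)
qed

lemma ideal_gen_0: "0 \<in> ideal_gen F"
  unfolding ideal_gen_def by (auto intro: exI[of _ "\<lambda>j. 0"])

lemma ideal_gen_diff: "p \<in> ideal_gen F \<Longrightarrow> q \<in> ideal_gen F \<Longrightarrow> p - q \<in> ideal_gen F"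
  using ideal_gen_add[of p F "-q"] ideal_gen_mult[of q F "-1"] by simp

lemma ideal_gen_sum: "(\<And>i. i \<in> A \<Longrightarrow> f i \<in> ideal_gen F) \<Longrightarrow> sum f A \<in> ideal_gen F"
  by (induction A rule: infinite_finite_induct) (auto simp: ideal_gen_0 ideal_gen_add)

lemma nth_in_ideal_gen: "j < length F \<Longrightarrow> F ! j \<in> ideal_gen F"
  unfolding ideal_gen_def
proof (intro CollectI exI)
  assume j: "j < length F"
  have "(\<Sum>i<length F. (if i = j then 1 else 0) * F ! i) = (\<Sum>i<length F. if i = j then F ! i else 0)"
    by (rule sum.cong) auto
  also have "\<dots> = F ! j" using j by (simp add: sum.delta')
  finally show "F ! j = (\<Sum>i<length F. (if i = j then 1 else 0) * F ! i)" by simp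
qed

lemma ideal_gen_subset: "set G \<subseteq> ideal_gen F \<Longrightarrow> ideal_gen G \<subseteq> ideal_gen F"
proof
  fix p assume s: "set G \<subseteq> ideal_gen F" and "p \<in> ideal_gen G"
  then obtain w where p: "p = (\<Sum>j<length G. w j * G ! j)" unfolding ideal_gen_def by auto
  show "p \<in> ideal_gen F" unfolding p
    by (rule ideal_gen_sum, rule ideal_gen_mult, use s in auto)
qed

section \<open>Monomials and normal forms\<close>

lemma lm_in_monomials: "p \<noteq> 0 \<Longrightarrow> lm p \<in> monomials p"
  unfolding lm_def monomials_def by simp

lemma monomials_diff: "monomials (p - q) \<subseteq> monomials p \<union> monomials q"
  unfolding monomials_def by auto

lemma fst_monomial_le_degree: "\<mu> \<in> monomials p \<Longrightarrow> fst \<mu> \<le> degree p"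
  unfolding monomials_def by (auto intro: le_degree)

lemma finite_monomials: "finite (monomials p)"
proof -
  define b where "b = Max ((\<lambda>a. degree (coeff p a)) ` {..degree p})"
  have "monomials p \<subseteq> {..degree p} \<times> {..b}"
  proof
    fix \<mu> assume "\<mu> \<in> monomials p"
    then obtain a e where \<mu>: "\<mu> = (a, e)" and c: "coeff (coeff p a) e \<noteq> 0"
      unfolding monomials_def by auto
    then have a: "a \<le> degree p" by (auto intro: le_degree)
    have "e \<le> degree (coeff p a)" using c by (rule le_degree)
    also have "\<dots> \<le> b" unfolding b_def using a by (intro Max_ge) auto
    finally show "\<mu> \<in> {..degree p} \<times> {..b}" using a \<mu> by auto
  qed
  then show ?thesis by (rule finite_subset) auto
qed

definition reducible :: "'a::zero bipoly list \<Rightarrow> nat \<times> nat \<Rightarrow> bool" where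
  "reducible G \<mu> \<longleftrightarrow> (\<exists>g\<in>set G. mon_dvd (lm g) \<mu>)"

lemma irreducible_in_ideal_eq_0:
  assumes "reduced_lex_GB G I" and "f \<in> I" and "\<forall>\<mu>\<in>monomials f. \<not> reducible G \<mu>"
  shows "f = 0"
  using assms lm_in_monomials unfolding reduced_lex_GB_def reducible_def by blast

lemma coeff_coeff_monom_monom_mult:
  "coeff (coeff (monom (monom c s) t * g) k) l =
    (if t \<le> k \<and> s \<le> l then c * coeff (coeff g (k - t)) (l - s) else 0)"
  by (simp add: coeff_monom_mult)

lemma reduction_step:
  fixes g :: "'a::field bipoly" and c :: 'a
  assumes g1: "lcoeff g = 1" and dv: "mon_dvd (lm g) (m, e)"
  defines "q \<equiv> monom (monom c (e - degree (lead_coeff g))) (m - degree g) * g"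
  shows "coeff (coeff q m) e = c" and "\<forall>\<nu>\<in>monomials q. \<nu> \<le> (m, e)" and "degree q \<le> m"
proof -
  let ?n = "degree g" and ?b = "degree (lead_coeff g)"
  have nm: "?n \<le> m" and be: "?b \<le> e" using dv unfolding mon_dvd_def lm_def by auto
  show "coeff (coeff q m) e = c" unfolding q_def coeff_coeff_monom_monom_mult using nm be g1
    by (simp add: lcoeff_def)
  show "\<forall>\<nu>\<in>monomials q. \<nu> \<le> (m, e)"
  proof
    fix \<nu> assume "\<nu> \<in> monomials q"
    then obtain k l where \<nu>: "\<nu> = (k, l)" and c: "coeff (coeff q k) l \<noteq> 0"
      unfolding monomials_def by auto
    from c have k1: "m - ?n \<le> k" and l1: "e - ?b \<le> l"
      and c2: "coeff (coeff g (k - (m - ?n))) (l - (e - ?b)) \<noteq> 0"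
      unfolding q_def coeff_coeff_monom_monom_mult by (auto split: if_splits)
    from c2 have "k - (m - ?n) \<le> ?n" by (auto intro: le_degree)
    then have km: "k \<le> m" using k1 nm by linarith
    show "\<nu> \<le> (m, e)"
    proof (cases "k = m")
      case True
      with c2 nm have "coeff (lead_coeff g) (l - (e - ?b)) \<noteq> 0" by simp
      then have "l - (e - ?b) \<le> ?b" by (rule le_degree)
      then show ?thesis using True \<nu> l1 be by simp
    next
      case False then show ?thesis using km \<nu> by simp
    qed
  qed
  have "degree q \<le> degree (monom (monom c (e - ?b)) (m - ?n) :: 'a bipoly) + ?n"
    unfolding q_def by (rule degree_mult_le)
  also have "\<dots> \<le> (m - ?n) + ?n" by (simp add: degree_monom_le)
  also have "\<dots> = m" using nm by simp
  finally show "degree q \<le> m" .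
qed

lemma normal_form_exists_below:
  fixes G :: "'a::field bipoly list"
  assumes GB: "reduced_lex_GB G I"
    and "\<forall>\<mu>\<in>monomials p. reducible G \<mu> \<longrightarrow> \<mu> < \<beta>"
  shows "\<exists>r. p - r \<in> ideal_gen G \<and> (\<forall>\<mu>\<in>monomials r. \<not> reducible G \<mu>) \<and> degree r \<le> degree p"
  using assms(2)
proof (induction \<beta> arbitrary: p rule: less_induct)
  case (less \<beta>)
  let ?R = "{\<mu>\<in>monomials p. reducible G \<mu>}"
  show ?case
  proof (cases "?R = {}")
    case True
    then show ?thesis by (intro exI[of _ p]) (auto simp: ideal_gen_0)
  next
    case False
    have fin: "finite ?R" using finite_monomials[of p] by simp
    obtain m e where \<mu>: "(m, e) = Max ?R" by (metis surj_pair)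
    have \<mu>R: "(m, e) \<in> ?R" unfolding \<mu> using fin False by (rule Max_in)
    have \<mu>max: "\<And>\<nu>. \<nu> \<in> ?R \<Longrightarrow> \<nu> \<le> (m, e)" unfolding \<mu> using fin by auto
    from \<mu>R obtain g where gG: "g \<in> set G" and dv: "mon_dvd (lm g) (m, e)"
      unfolding reducible_def by auto
    have g1: "lcoeff g = 1" using GB gG unfolding reduced_lex_GB_def by auto
    define q where "q = monom (monom (coeff (coeff p m) e) (e - degree (lead_coeff g))) (m - degree g) * g"
    note step = reduction_step[OF g1 dv, of "coeff (coeff p m) e", folded q_def]
    have qI: "q \<in> ideal_gen G" unfolding q_def
      using gG by (auto intro!: ideal_gen_mult nth_in_ideal_gen simp: in_set_conv_nth)
    have below: "\<forall>\<nu>\<in>monomials (p - q). reducible G \<nu> \<longrightarrow> \<nu> < (m, e)"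
    proof (intro ballI impI)
      fix \<nu> assume n1: "\<nu> \<in> monomials (p - q)" and n2: "reducible G \<nu>"
      have "\<nu> \<noteq> (m, e)" using n1 step(1) unfolding monomials_def by auto
      moreover have "\<nu> \<in> monomials p \<union> monomials q" using n1 monomials_diff by blast
      then have "\<nu> \<le> (m, e)" using \<mu>max n2 step(2) by blast
      ultimately show "\<nu> < (m, e)" by simp
    qed
    have "(m, e) < \<beta>" using less.prems \<mu>R by auto
    from less.IH[OF this below] obtain r where
      r: "p - q - r \<in> ideal_gen G" "\<forall>\<mu>\<in>monomials r. \<not> reducible G \<mu>" "degree r \<le> degree (p - q)"
      by blast
    have "p - r = (p - q - r) + q" by simp
    then have "p - r \<in> ideal_gen G" using ideal_gen_add[OF r(1) qI] by metis
    moreover have "m \<le> degree p" using \<mu>R fst_monomial_le_degree by fastforce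
    then have "degree (p - q) \<le> degree p"
      using degree_diff_le[of p "degree p" q] step(3) by simp
    ultimately show ?thesis using r by (intro exI[of _ r]) auto
  qed
qed

lemma NF_properties:
  fixes G F :: "'a::field bipoly list"
  assumes GB: "reduced_lex_GB G (ideal_gen F)"
  shows "p - NF G p \<in> ideal_gen G" and "\<forall>\<mu>\<in>monomials (NF G p). \<not> reducible G \<mu>"
    and "degree (NF G p) \<le> degree p"
proof -
  have "\<forall>\<mu>\<in>monomials p. reducible G \<mu> \<longrightarrow> \<mu> < (degree p + 1, 0)"
    using fst_monomial_le_degree by fastforce
  then obtain r where r: "p - r \<in> ideal_gen G" "\<forall>\<mu>\<in>monomials r. \<not> reducible G \<mu>" "degree r \<le> degree p"
    using normal_form_exists_below[OF GB] by blast
  have sub: "ideal_gen G \<subseteq> ideal_gen F"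
    using GB unfolding reduced_lex_GB_def by (intro ideal_gen_subset) auto
  have "NF G p = r" unfolding NF_def
  proof (rule the_equality)
    show "p - r \<in> ideal_gen G \<and> (\<forall>m\<in>monomials r. \<forall>g\<in>set G. \<not> mon_dvd (lm g) m)"
      using r unfolding reducible_def by auto
  next
    fix r' assume r': "p - r' \<in> ideal_gen G \<and> (\<forall>m\<in>monomials r'. \<forall>g\<in>set G. \<not> mon_dvd (lm g) m)"
    have "r - r' = (p - r') - (p - r)" by simp
    then have "r - r' \<in> ideal_gen F" using r(1) r' sub ideal_gen_diff by fastforce
    moreover have "\<forall>\<mu>\<in>monomials (r - r'). \<not> reducible G \<mu>"
      using monomials_diff[of r r'] r(2) r' unfolding reducible_def by blast
    ultimately have "r - r' = 0" by (rule irreducible_in_ideal_eq_0[OF GB])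
    then show "r' = r" by simp
  qed
  then show "p - NF G p \<in> ideal_gen G" "\<forall>\<mu>\<in>monomials (NF G p). \<not> reducible G \<mu>"
    "degree (NF G p) \<le> degree p" using r by auto
qed

section \<open>Zero-dimensional ideals\<close>

lemma underdetermined_linear_system_has_nonzero_solution:
  fixes c :: "nat \<Rightarrow> 'b \<Rightarrow> 'a::field"
  assumes fin: "finite B"
  shows "\<exists>lam. (\<exists>k<card B + 2. lam k \<noteq> 0) \<and> (\<forall>b\<in>B. (\<Sum>k<card B + 2. lam k * c k b) = 0)"
proof -
  obtain bs where bs: "set bs = B" "distinct bs" using finite_distinct_list[OF fin] by blast
  define m where "m = card B"
  have mlen: "length bs = m" unfolding m_def using bs distinct_card by fastforce
  define N where "N = m + 2"
  define A :: "'a mat" where "A = mat N N (\<lambda>(r, k). if r < m then c k (bs ! r) else 0)"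
  have A: "A \<in> carrier_mat N N" unfolding A_def by simp
  \<comment> \<open>padded with two zero rows, the system becomes a singular square matrix\<close>
  have "row A m = row A (m + 1)"
    by (rule eq_vecI) (auto simp: A_def N_def)
  then have "det A = 0" by (intro det_identical_rows[OF A, of m "m+1"]) (auto simp: N_def)
  then obtain v where v: "v \<in> carrier_vec N" "v \<noteq> 0\<^sub>v N" "A *\<^sub>v v = 0\<^sub>v N"
    using det_0_iff_vec_prod_zero_field[OF A] by blast
  have "\<exists>k<N. v $ k \<noteq> 0"
  proof (rule ccontr)
    assume "\<not> ?thesis"
    then have "v = 0\<^sub>v N" using v(1) by (intro eq_vecI) auto
    with v(2) show False by simp
  qed
  moreover have "(\<Sum>k<N. v $ k * c k b) = 0" if "b \<in> B" for b
  proof -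
    obtain r where r: "r < m" "b = bs ! r" using \<open>b \<in> B\<close> bs(1) mlen by (auto simp: in_set_conv_nth)
    have "(A *\<^sub>v v) $ r = (\<Sum>k<N. v $ k * c k b)"
      using r v(1) A by (auto simp: A_def N_def scalar_prod_def lessThan_atLeast0 intro!: sum.cong)
    then show ?thesis using v(3) r by (simp add: N_def)
  qed
  ultimately show ?thesis unfolding N_def m_def by blast
qed

lemma zero_dim_linear_relation:
  fixes F :: "'a::field bipoly list" and q :: "nat \<Rightarrow> 'a bipoly"
  assumes zd: "zero_dim (ideal_gen F)"
  shows "\<exists>N lam. (\<exists>k<N. lam k \<noteq> 0) \<and> (\<Sum>k<N. [:[:lam k:]:] * q k) \<in> ideal_gen F"
proof -
  let ?I = "ideal_gen F"
  obtain B where fin: "finite B" and sp: "\<forall>p. \<exists>c. p - (\<Sum>b\<in>B. [:[:c b:]:] * b) \<in> ?I"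
    using zd unfolding zero_dim_def by blast
  then have "\<forall>k. \<exists>c. q k - (\<Sum>b\<in>B. [:[:c b:]:] * b) \<in> ?I" by blast
  from choice[OF this] obtain C where C: "\<And>k. q k - (\<Sum>b\<in>B. [:[:C k b:]:] * b) \<in> ?I"
    by blast
  let ?N = "card B + 2"
  obtain lam where lam: "\<exists>k<?N. lam k \<noteq> 0" "\<forall>b\<in>B. (\<Sum>k<?N. lam k * C k b) = 0"
    using underdetermined_linear_system_has_nonzero_solution[OF fin, of C] by blast
  have const_sum: "(\<Sum>k\<in>A. [:[:f k:]:]) = [:[:\<Sum>k\<in>A. f k:]:]" for A and f :: "nat \<Rightarrow> 'a"
    by (induction A rule: infinite_finite_induct) auto
  have const_mult: "[:[:a:]:] * [:[:b:]:] = [:[:a * b:]:]" for a b :: 'a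
    by simp
  have "(\<Sum>k<?N. [:[:lam k:]:] * (\<Sum>b\<in>B. [:[:C k b:]:] * b)) =
        (\<Sum>b\<in>B. (\<Sum>k<?N. [:[:lam k:]:] * [:[:C k b:]:]) * b)"
    unfolding sum_distrib_left sum_distrib_right mult.assoc by (rule sum.swap)
  also have "\<dots> = (\<Sum>b\<in>B. [:[:\<Sum>k<?N. lam k * C k b:]:] * b)"
    by (simp only: const_mult const_sum)
  also have "\<dots> = 0" using lam(2) by simp
  finally have z: "(\<Sum>k<?N. [:[:lam k:]:] * (\<Sum>b\<in>B. [:[:C k b:]:] * b)) = 0" .
  have "(\<Sum>k<?N. [:[:lam k:]:] * (q k - (\<Sum>b\<in>B. [:[:C k b:]:] * b))) \<in> ?I"
    by (rule ideal_gen_sum, rule ideal_gen_mult, rule C)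
  also have "(\<Sum>k<?N. [:[:lam k:]:] * (q k - (\<Sum>b\<in>B. [:[:C k b:]:] * b))) =
      (\<Sum>k<?N. [:[:lam k:]:] * q k) - (\<Sum>k<?N. [:[:lam k:]:] * (\<Sum>b\<in>B. [:[:C k b:]:] * b))"
    by (simp add: right_diff_distrib sum_subtractf)
  finally have "(\<Sum>k<?N. [:[:lam k:]:] * q k) \<in> ?I"
    unfolding z by simp
  then show ?thesis using lam(1) by blast
qed

lemma zero_dim_has_univariate_element:
  fixes F :: "'a::field bipoly list"
  assumes zd: "zero_dim (ideal_gen F)"
  shows "\<exists>f\<in>ideal_gen F. f \<noteq> 0 \<and> degree f = 0"
proof -
  obtain N lam where lam: "\<exists>k<N. lam k \<noteq> 0" "(\<Sum>k<N. [:[:lam k:]:] * [:monom 1 k:]) \<in> ideal_gen F"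
    using zero_dim_linear_relation[OF zd, of "\<lambda>k. [:monom 1 k:]"] by blast
  define P where "P = (\<Sum>k<N. monom (lam k) k)"
  have "(\<Sum>k<N. [:[:lam k:]:] * [:monom 1 k:]) = (\<Sum>k<N. [:monom (lam k) k:])"
    by (rule sum.cong) (auto simp: smult_monom)
  also have "\<dots> = [:P:]" unfolding P_def by (induction N) auto
  finally have PI: "[:P:] \<in> ideal_gen F" using lam(2) by simp
  obtain k where k: "k < N" "lam k \<noteq> 0" using lam(1) by blast
  have "coeff P k = lam k" unfolding P_def coeff_sum using k by (simp add: coeff_monom)
  then have "P \<noteq> 0" using k by auto
  then show ?thesis using PI by (intro bexI[of _ "[:P:]"]) auto
qed

lemma zero_dim_has_element_with_constant_lead_coeff:
  fixes F :: "'a::field bipoly list"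
  assumes zd: "zero_dim (ideal_gen F)"
  shows "\<exists>f\<in>ideal_gen F. f \<noteq> 0 \<and> degree (lead_coeff f) = 0"
proof -
  obtain N lam where lam: "\<exists>k<N. lam k \<noteq> 0" "(\<Sum>k<N. [:[:lam k:]:] * monom 1 k) \<in> ideal_gen F"
    using zero_dim_linear_relation[OF zd, of "\<lambda>k. monom 1 k"] by blast
  define f where "f = (\<Sum>k<N. [:[:lam k:]:] * monom 1 k)"
  have cf: "coeff f j = [:(if j < N then lam j else 0):]" for j
  proof -
    have "coeff f j = (\<Sum>k<N. if k = j then [:lam k:] else 0)"
      unfolding f_def coeff_sum by (rule sum.cong) (auto simp: coeff_monom smult_monom)
    also have "\<dots> = [:(if j < N then lam j else 0):]" by (simp add: sum.delta')
    finally show ?thesis .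
  qed
  obtain k where k: "k < N" "lam k \<noteq> 0" using lam(1) by blast
  then have "coeff f k \<noteq> 0" using cf by simp
  then have "f \<noteq> 0" by auto
  moreover have "degree (lead_coeff f) = 0" using cf by simp
  ultimately show ?thesis using lam(2) f_def by blast
qed

section \<open>The Groebner basis of a zero-dimensional ideal\<close>

locale zero_dim_lex_GB =
  fixes F G :: "'a::field bipoly list"
  assumes GB: "reduced_lex_GB G (ideal_gen F)" and zd: "zero_dim (ideal_gen F)"
begin

abbreviation ydeg :: "nat \<Rightarrow> nat" where "ydeg k \<equiv> degree (G ! k)"
abbreviation xdeg :: "nat \<Rightarrow> nat" where "xdeg k \<equiv> degree (lead_coeff (G ! k))"

lemma G_nth:
  assumes "k < length G"
  shows "G ! k \<noteq> 0" "G ! k \<in> ideal_gen F" "lcoeff (G ! k) = 1"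
  using GB assms unfolding reduced_lex_GB_def by (auto dest: nth_mem)

lemma G_ne: "G \<noteq> []"
  using GB unfolding reduced_lex_GB_def by auto

lemma G_in_ideal: "ideal_gen G \<subseteq> ideal_gen F"
  using GB unfolding reduced_lex_GB_def by (intro ideal_gen_subset) auto

lemma ydeg_xdeg_strict_mono:
  assumes ij: "i < j" "j < length G"
  shows "ydeg j < ydeg i \<and> xdeg i < xdeg j"
proof -
  have lt: "lex_less (lm (G ! j)) (lm (G ! i))" using GB ij unfolding reduced_lex_GB_def by auto
  have ne: "G ! j \<noteq> G ! i" using GB ij unfolding reduced_lex_GB_def by (simp add: nth_eq_iff_index_eq)
  have "lm (G ! i) \<in> monomials (G ! i)" using G_nth(1) ij by (intro lm_in_monomials) auto
  with ne GB ij have "\<not> mon_dvd (lm (G ! j)) (lm (G ! i))"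
    unfolding reduced_lex_GB_def by (metis less_trans nth_mem)
  with lt show ?thesis unfolding lex_less_def mon_dvd_def lm_def by auto
qed

lemma ydeg_antimono: "i \<le> j \<Longrightarrow> j < length G \<Longrightarrow> ydeg j \<le> ydeg i"
  using ydeg_xdeg_strict_mono[of i j] by (cases "i = j") auto

lemma xdeg_mono: "i \<le> j \<Longrightarrow> j < length G \<Longrightarrow> xdeg i \<le> xdeg j"
  using ydeg_xdeg_strict_mono[of i j] by (cases "i = j") auto

lemma obtain_G_lm_dvd:
  assumes "f \<in> ideal_gen F" "f \<noteq> 0"
  obtains k where "k < length G" "ydeg k \<le> degree f" "xdeg k \<le> degree (lead_coeff f)"
  using GB assms unfolding reduced_lex_GB_def mon_dvd_def lm_def by (fastforce simp: in_set_conv_nth)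

lemma nS_eq_0: "nS G = 0"
proof -
  obtain f where f: "f \<in> ideal_gen F" "f \<noteq> 0" "degree f = 0"
    using zero_dim_has_univariate_element[OF zd] by blast
  then obtain k where k: "k < length G" "ydeg k = 0" by (auto elim: obtain_G_lm_dvd)
  have "ydeg (length G - 1) \<le> ydeg k" using k by (intro ydeg_antimono) auto
  then show ?thesis unfolding nS_def using k G_ne by (simp add: last_conv_nth)
qed

lemma lead_coeff_G0: "lead_coeff (G ! 0) = 1"
proof -
  obtain f where f: "f \<in> ideal_gen F" "f \<noteq> 0" "degree (lead_coeff f) = 0"
    using zero_dim_has_element_with_constant_lead_coeff[OF zd] by blast
  then obtain k where k: "k < length G" "xdeg k = 0" by (auto elim: obtain_G_lm_dvd)
  then have "xdeg 0 = 0" using xdeg_mono[of 0 k] by simp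
  moreover have "lcoeff (G ! 0) = 1" using G_nth(3) G_ne by auto
  ultimately show ?thesis unfolding lcoeff_def by (metis degree_0_id one_pCons)
qed

lemma lead_coeff_G_neq_1: "0 < k \<Longrightarrow> k < length G \<Longrightarrow> lead_coeff (G ! k) \<noteq> 1"
  using ydeg_xdeg_strict_mono[of 0 k] lead_coeff_G0 by auto

text \<open>The index \<open>k\<close> with \<open>n\<^sub>k \<le> i < n\<^sub>k\<^sub>-\<^sub>1\<close>.\<close>
definition gb_index :: "nat \<Rightarrow> nat" where
  "gb_index i = (LEAST k. k < length G \<and> ydeg k \<le> i)"

lemma gb_index_least:
  shows "gb_index i < length G" "ydeg (gb_index i) \<le> i"
    and "\<And>k. k < length G \<Longrightarrow> ydeg k \<le> i \<Longrightarrow> gb_index i \<le> k"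
proof -
  have "length G - 1 < length G \<and> ydeg (length G - 1) \<le> i"
    using nS_eq_0 G_ne unfolding nS_def by (simp add: last_conv_nth)
  then have ex: "\<exists>k. k < length G \<and> ydeg k \<le> i" by blast
  show "gb_index i < length G" "ydeg (gb_index i) \<le> i"
    using LeastI_ex[OF ex] unfolding gb_index_def by auto
  show "\<And>k. k < length G \<Longrightarrow> ydeg k \<le> i \<Longrightarrow> gb_index i \<le> k"
    unfolding gb_index_def by (rule Least_le) auto
qed

lemma gb_index_eq:
  assumes "k < length G" "ydeg k = i"
  shows "gb_index i = k"
proof (rule antisym)
  show "gb_index i \<le> k" using assms by (intro gb_index_least(3)) auto
  show "k \<le> gb_index i"
  proof (rule ccontr)
    assume "\<not> k \<le> gb_index i"
    then have "ydeg k < ydeg (gb_index i)" using ydeg_xdeg_strict_mono[of "gb_index i" k] assms by simp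
    with gb_index_least(2)[of i] assms show False by simp
  qed
qed

lemma xdeg_gb_index_le:
  assumes "f \<in> ideal_gen F" "f \<noteq> 0"
  shows "xdeg (gb_index (degree f)) \<le> degree (lead_coeff f)"
proof -
  obtain k where k: "k < length G" "ydeg k \<le> degree f" "xdeg k \<le> degree (lead_coeff f)"
    using assms by (rule obtain_G_lm_dvd)
  then show ?thesis using xdeg_mono[OF gb_index_least(3)[OF k(1,2)] k(1)] by simp
qed

lemma irreducible_xdeg_less: "\<not> reducible G (m, e) \<Longrightarrow> e < xdeg (gb_index m)"
  using gb_index_least(1,2)[of m] unfolding reducible_def mon_dvd_def lm_def
  by (metis fst_conv snd_conv not_le nth_mem)

end

section \<open>The detaching basis\<close>

lemma coeff_monom_1_1_mult:
  fixes p :: "'b::comm_semiring_1 poly"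
  shows "coeff (monom 1 1 * p) k = (if k = 0 then 0 else coeff p (k - 1))"
  by (auto simp add: coeff_monom_mult)

lemma coeff_ytrunc: "coeff (ytrunc i h) l = (if l < i then coeff h l else 0)"
  unfolding ytrunc_def coeff_sum by (simp add: coeff_monom sum.delta')

context zero_dim_lex_GB
begin

definition detaching :: "nat \<Rightarrow> 'a bipoly \<Rightarrow> bool" where
  "detaching i A \<longleftrightarrow> A \<in> ideal_gen F \<and> degree A = i \<and> lead_coeff A = lead_coeff (G ! gb_index i) \<and>
      (\<forall>m e. (m, e) \<in> monomials A \<longrightarrow> m < i \<longrightarrow> \<not> reducible G (m, e))"

lemma SOME_ydeg_eq:
  assumes "k0 < length G" "ydeg k0 = i"
  shows "(SOME k. k < length G \<and> ydeg k = i) = k0"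
  using assms gb_index_eq by (intro some_equality) metis+

lemma detaching_G_nth:
  assumes k0: "k0 < length G" "ydeg k0 = i"
  shows "detaching i (G ! k0)"
proof -
  have "\<not> reducible G (m, e)" if me: "(m, e) \<in> monomials (G ! k0)" "m < i" for m e
  proof
    assume "reducible G (m, e)"
    then obtain k' where k': "k' < length G" "mon_dvd (lm (G ! k')) (m, e)"
      unfolding reducible_def by (auto simp: in_set_conv_nth)
    show False
    proof (cases "k' = k0")
      case True then show False using k' me k0 unfolding mon_dvd_def lm_def by auto
    next
      case False
      then have "G ! k' \<noteq> G ! k0" using GB k0 k' unfolding reduced_lex_GB_def
        by (simp add: nth_eq_iff_index_eq)
      then show False using GB k0 k' me unfolding reduced_lex_GB_def by (metis nth_mem)
    qed
  qed
  then show ?thesis unfolding detaching_def gb_index_eq[OF k0] using k0 G_nth[OF k0(1)] by auto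
qed

lemma detaching_step:
  assumes A: "detaching j A" and gap: "\<not> (\<exists>k<length G. ydeg k = Suc j)"
  defines "h \<equiv> monom 1 1 * A"
  shows "detaching (Suc j) ((h - ytrunc (Suc j) h) + NF G (ytrunc (Suc j) h))"
    (is "detaching _ ?D")
proof -
  let ?t = "ytrunc (Suc j) h"
  have AI: "A \<in> ideal_gen F" and degA: "degree A = j"
    and lcA: "lead_coeff A = lead_coeff (G ! gb_index j)"
    using A unfolding detaching_def by auto
  have lcA0: "lead_coeff A \<noteq> 0" using lcA G_nth(1) gb_index_least(1) by auto
  have "gb_index (Suc j) = gb_index j"
    unfolding gb_index_def using gap by (metis le_Suc_eq)
  then have lcA': "lead_coeff A = lead_coeff (G ! gb_index (Suc j))" using lcA by simp
  have ch: "coeff h l = (if l = 0 then 0 else coeff A (l - 1))" for l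
    unfolding h_def coeff_monom_1_1_mult ..
  have "degree ?t \<le> j" by (rule degree_le) (auto simp: coeff_ytrunc ch)
  then have "degree (NF G ?t) \<le> j" using NF_properties(3)[OF GB, of ?t] by simp
  then have cNF: "coeff (NF G ?t) l = 0" if "j < l" for l using that by (simp add: coeff_eq_0)
  have cD: "coeff ?D l = (if l \<le> j then coeff (NF G ?t) l else coeff h l)" for l
    by (cases "l \<le> j") (simp_all add: coeff_ytrunc cNF)
  have top: "coeff ?D (Suc j) = lead_coeff A" unfolding cD using degA by (simp add: ch)
  have deg: "degree ?D = Suc j"
  proof (rule antisym)
    show "degree ?D \<le> Suc j"
    proof (rule degree_le, intro allI impI)
      fix l assume "Suc j < l"
      then show "coeff ?D l = 0" unfolding cD using degA by (simp add: ch coeff_eq_0)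
    qed
    show "Suc j \<le> degree ?D"
      by (rule le_degree) (use lcA0 top in simp)
  qed
  have "lead_coeff ?D = lead_coeff A" using deg top by simp
  moreover have "?D = h - (?t - NF G ?t)" by simp
  then have "?D \<in> ideal_gen F"
    using ideal_gen_mult[OF AI] NF_properties(1)[OF GB, of ?t] G_in_ideal
    unfolding h_def by (metis ideal_gen_diff subsetD)
  moreover have "\<not> reducible G (m, e)" if "(m, e) \<in> monomials ?D" "m < Suc j" for m e
  proof -
    have "coeff ?D m = coeff (NF G ?t) m" using that(2) unfolding cD by simp
    then have "(m, e) \<in> monomials (NF G ?t)" using that(1) unfolding monomials_def by simp
    then show ?thesis using NF_properties(2)[OF GB, of ?t] by blast
  qed
  ultimately show ?thesis unfolding detaching_def using deg lcA' by auto
qed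

lemma detaching_detach: "detaching i (detach G i)"
proof (induction i)
  case 0
  have k0: "length G - 1 < length G" "ydeg (length G - 1) = 0"
    using nS_eq_0 G_ne unfolding nS_def by (auto simp: last_conv_nth)
  then have "detach G 0 = G ! (length G - 1)" using nS_eq_0 SOME_ydeg_eq[OF k0] by auto
  then show ?case using detaching_G_nth[OF k0] by simp
next
  case (Suc j)
  show ?case
  proof (cases "\<exists>k<length G. ydeg k = Suc j")
    case True
    then obtain k0 where k0: "k0 < length G" "ydeg k0 = Suc j" by blast
    then have "detach G (Suc j) = G ! k0" using nS_eq_0 SOME_ydeg_eq[OF k0] by auto
    then show ?thesis using detaching_G_nth[OF k0] by simp
  next
    case False
    then show ?thesis using detaching_step[OF Suc False] nS_eq_0 by (auto simp: Let_def)
  qed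
qed

lemma detach_multipliers_bounded:
  assumes "Delta F G \<le> D" "i \<le> n0 G"
  shows "\<exists>w. (\<forall>j<length F. degree (w j) < D) \<and> detach G i = (\<Sum>j<length F. w j * F ! j)"
proof -
  let ?P = "\<lambda>\<Delta>. \<forall>i\<in>{nS G..n0 G}. \<exists>w.
        (\<forall>j<length F. degree (w j) < \<Delta>) \<and> detach G i = (\<Sum>j<length F. w j * F ! j)"
  have "\<exists>w. detach G i = (\<Sum>j<length F. w j * F ! j)" for i
    using detaching_detach[of i] unfolding detaching_def ideal_gen_def by auto
  then obtain W where W: "\<And>i. detach G i = (\<Sum>j<length F. W i j * F ! j)" by metis
  define M where "M = Max ((\<lambda>(i, j). degree (W i j)) ` ({..n0 G} \<times> {..<length F}))"
  have "degree (W i j) \<le> M" if "i \<le> n0 G" "j < length F" for i j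
    unfolding M_def using that by (intro Max_ge) auto
  then have "?P (M + 1)" using W by (fastforce simp: less_Suc_eq_le)
  then have "?P (Delta F G)" unfolding Delta_def by (rule LeastI)
  moreover have "i \<in> {nS G..n0 G}" using assms(2) nS_eq_0 by simp
  ultimately obtain w where "\<forall>j<length F. degree (w j) < Delta F G" "detach G i = (\<Sum>j<length F. w j * F ! j)"
    by blast
  then show ?thesis using assms(1) by (intro exI[of _ w]) (auto intro: less_le_trans)
qed

end

section \<open>The matrix \<open>S\<close>\<close>

lemma coeff_pi_inv: "coeff (pi_inv n v) m = (if m < n then v $ (n - 1 - m) else 0)"
proof -
  have "coeff (pi_inv n v) m = (\<Sum>r<n. if r = n - 1 - m \<and> m < n then v $ r else 0)"
    unfolding pi_inv_def coeff_sum by (rule sum.cong) (auto simp: coeff_monom)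
  also have "\<dots> = (if m < n then v $ (n - 1 - m) else 0)"
    by (cases "m < n") (auto simp: sum.delta')
  finally show ?thesis .
qed

lemma pi_inv_minus:
  "a \<in> carrier_vec n \<Longrightarrow> b \<in> carrier_vec n \<Longrightarrow> pi_inv n (a - b) = pi_inv n a - pi_inv n b"
  by (intro poly_eqI) (auto simp: coeff_pi_inv)

lemma sum_lessThan_mult_split:
  fixes t D :: nat
  shows "(\<Sum>c<t * D. g c) = (\<Sum>q<t. \<Sum>l<D. g (q * D + l))"
proof -
  have "(\<Sum>c<t * D. g c) = (\<Sum>q<t. sum g {q * D..<q * D + D})" using sum.nat_group[of g D t] by simp
  also have "\<dots> = (\<Sum>q<t. \<Sum>l<D. g (q * D + l))"
  proof (rule sum.cong[OF refl])
    fix q show "sum g {q * D..<q * D + D} = (\<Sum>l<D. g (q * D + l))"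
      by (rule sum.reindex_bij_witness[of _ "\<lambda>l. q * D + l" "\<lambda>c. c - q * D"]) auto
  qed
  finally show ?thesis .
qed

lemma S_mat_carrier: "S_mat F dy D \<in> carrier_mat (dy + D) (length F * D)"
  unfolding S_mat_def by simp

text \<open>Block \<open>q\<close> of a vector \<open>u\<close> with \<open>S u = \<pi>(\<Sum>\<^sub>q w\<^sub>q f\<^sub>q)\<close> holds the coefficients of \<open>w\<^sub>q\<close>,
  highest power \<open>y\<^sup>D\<^sup>-\<^sup>1\<close> first.\<close>
definition block_multiplier :: "nat \<Rightarrow> 'a::comm_ring_1 poly vec \<Rightarrow> nat \<Rightarrow> 'a bipoly" where
  "block_multiplier D u q = (\<Sum>l<D. monom (u $ (q * D + l)) (D - 1 - l))"

lemma pi_inv_S_mat_mult_vec: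
  fixes F :: "'a::comm_ring_1 bipoly list"
  assumes deg: "\<forall>f\<in>set F. degree f \<le> dy" and u: "u \<in> carrier_vec (length F * D)"
  shows "pi_inv (dy + D) (S_mat F dy D *\<^sub>v u) = (\<Sum>q<length F. block_multiplier D u q * F ! q)"
proof (rule poly_eqI)
  fix m
  let ?n = "dy + D" and ?t = "length F"
  have rhs: "coeff (\<Sum>q<?t. block_multiplier D u q * F ! q) m =
     (\<Sum>q<?t. \<Sum>l<D. u $ (q * D + l) *
        (if D - 1 - l \<le> m then coeff (F ! q) (m - (D - 1 - l)) else 0))"
    unfolding coeff_sum block_multiplier_def sum_distrib_right
    by (intro sum.cong refl) (simp add: coeff_monom_mult)
  show "coeff (pi_inv ?n (S_mat F dy D *\<^sub>v u)) m = coeff (\<Sum>q<?t. block_multiplier D u q * F ! q) m"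
  proof (cases "m < ?n")
    case True
    have "coeff (pi_inv ?n (S_mat F dy D *\<^sub>v u)) m =
        (\<Sum>c<?t * D. coeff (monom 1 (D - 1 - c mod D) * F ! (c div D)) m * u $ c)"
      using True u unfolding coeff_pi_inv S_mat_def
      by (auto simp: scalar_prod_def lessThan_atLeast0 intro!: sum.cong)
    also have "\<dots> = (\<Sum>q<?t. \<Sum>l<D. coeff (monom 1 (D - 1 - l) * F ! q) m * u $ (q * D + l))"
      unfolding sum_lessThan_mult_split by (intro sum.cong refl) (simp add: add.commute)
    also have "\<dots> = coeff (\<Sum>q<?t. block_multiplier D u q * F ! q) m"
      unfolding rhs by (intro sum.cong refl) (simp add: coeff_monom_mult)
    finally show ?thesis .
  next
    case False
    have "coeff (F ! q) (m - (D - 1 - l)) = 0" if "q < ?t" "l < D" for q l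
    proof -
      have "degree (F ! q) \<le> dy" using deg that(1) by auto
      moreover have "dy < m - (D - 1 - l)" using False that(2) by auto
      ultimately show ?thesis by (simp add: coeff_eq_0)
    qed
    then have "coeff (\<Sum>q<?t. block_multiplier D u q * F ! q) m = 0"
      unfolding rhs by (intro sum.neutral ballI) simp
    then show ?thesis using False by (simp add: coeff_pi_inv)
  qed
qed

lemma block_multiplier_vec:
  fixes w :: "nat \<Rightarrow> 'a::comm_ring_1 bipoly"
  assumes q: "q < t" and deg: "degree (w q) < D"
  shows "block_multiplier D (vec (t * D) (\<lambda>c. coeff (w (c div D)) (D - 1 - c mod D))) q = w q"
proof -
  have "q * D + l < t * D" if "l < D" for l
  proof -
    have "q * D + l < Suc q * D" using that by simp
    also have "\<dots> \<le> t * D" using q by (intro mult_right_mono) auto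
    finally show ?thesis .
  qed
  then have "block_multiplier D (vec (t * D) (\<lambda>c. coeff (w (c div D)) (D - 1 - c mod D))) q =
      (\<Sum>l<D. monom (coeff (w q) (D - Suc l)) (D - Suc l))"
    unfolding block_multiplier_def by (intro sum.cong refl) (simp add: add.commute)
  also have "\<dots> = (\<Sum>e<D. monom (coeff (w q) e) e)"
    by (rule sum.nat_diff_reindex)
  also have "\<dots> = (\<Sum>e\<le>D - 1. monom (coeff (w q) e) e)"
    using deg by (intro sum.cong) auto
  also have "\<dots> = w q" using deg by (intro poly_as_sum_of_monoms') auto
  finally show ?thesis .
qed

lemma combination_in_S_mat_range:
  fixes F :: "'a::comm_ring_1 bipoly list"
  assumes "\<forall>f\<in>set F. degree f \<le> dy" and "\<forall>q<length F. degree (w q) < D"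
  shows "\<exists>u\<in>carrier_vec (length F * D). (\<Sum>q<length F. w q * F ! q) = pi_inv (dy + D) (S_mat F dy D *\<^sub>v u)"
proof
  let ?u = "vec (length F * D) (\<lambda>c. coeff (w (c div D)) (D - 1 - c mod D))"
  show u: "?u \<in> carrier_vec (length F * D)" by simp
  show "(\<Sum>q<length F. w q * F ! q) = pi_inv (dy + D) (S_mat F dy D *\<^sub>v ?u)"
    unfolding pi_inv_S_mat_mult_vec[OF assms(1) u]
  proof (rule sum.cong[OF refl])
    fix q assume "q \<in> {..<length F}"
    then show "w q * F ! q = block_multiplier D ?u q * F ! q"
      using block_multiplier_vec[of q "length F" w D] assms(2) by simp
  qed
qed

section \<open>Columns of the Hermite normal form\<close>

lemma degree_diff_less:
  fixes a b :: "'a::ab_group_add poly"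
  assumes "a = 0 \<or> degree a < d" and "b = 0 \<or> degree b < d"
  shows "a - b = 0 \<or> degree (a - b) < d"
proof (cases "a = 0 \<or> b = 0")
  case True
  then show ?thesis using assms by auto
next
  case False
  then show ?thesis using assms degree_diff_le_max[of a b] by auto
qed

locale detach_hnf = zero_dim_lex_GB F G for F G :: "'a::field bipoly list" +
  fixes dy D :: nat and H :: "'a poly mat"
  assumes degF: "\<forall>f\<in>set F. degree f \<le> dy"
    and Delta_le: "Delta F G \<le> D" and hnf: "hermite_nf (S_mat F dy D) H"
begin

abbreviation "nr \<equiv> dy + D"
abbreviation "N \<equiv> length F * D"
abbreviation "K \<equiv> nz_cols H"

lemma hnf_transform:
  obtains U V where "U \<in> carrier_mat N N" "V \<in> carrier_mat N N" "U * V = 1\<^sub>m N"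
    "H = S_mat F dy D * U"
  using hnf S_mat_carrier[of F dy D] unfolding hermite_nf_def by auto

lemma H_carrier: "H \<in> carrier_mat nr N"
proof -
  obtain U V where "U \<in> carrier_mat N N" "H = S_mat F dy D * U" by (rule hnf_transform)
  then show ?thesis using S_mat_carrier[of F dy D] by simp
qed

lemma col_eq_H_mult_unit_vec: "j < N \<Longrightarrow> col H j = H *\<^sub>v unit_vec N j"
  using col_mult2[OF H_carrier one_carrier_mat, of j] H_carrier by simp

lemma hnf_columns:
  shows K_le: "K \<le> N"
    and col_eq_0_iff: "\<And>j. j < N \<Longrightarrow> col H j = 0\<^sub>v nr \<longleftrightarrow> K \<le> j"
    and piv_strict_mono: "\<And>j1 j2. j1 < j2 \<Longrightarrow> j2 < K \<Longrightarrow> piv H j1 < piv H j2"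
    and pivot_monic: "\<And>j. j < K \<Longrightarrow> lead_coeff (H $$ (piv H j, j)) = 1"
    and pivot_row_reduced: "\<And>j j'. j < K \<Longrightarrow> j' < j \<Longrightarrow>
      H $$ (piv H j, j') = 0 \<or> degree (H $$ (piv H j, j')) < degree (H $$ (piv H j, j))"
proof -
  have "hnf_shape H" using hnf unfolding hermite_nf_def by simp
  then obtain K0 where K0: "K0 \<le> N" "\<forall>j<N. col H j = 0\<^sub>v nr \<longleftrightarrow> K0 \<le> j"
    "\<forall>j1 j2. j1 < j2 \<longrightarrow> j2 < K0 \<longrightarrow> piv H j1 < piv H j2"
    "\<forall>j<K0. lead_coeff (H $$ (piv H j, j)) = 1 \<and>
         (\<forall>j'<j. H $$ (piv H j, j') = 0 \<or> degree (H $$ (piv H j, j')) < degree (H $$ (piv H j, j)))"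
    using H_carrier unfolding hnf_shape_def by auto
  have "{j. j < dim_col H \<and> col H j \<noteq> 0\<^sub>v (dim_row H)} = {..<K0}"
    using K0(1,2) H_carrier by auto
  then have "K = K0" unfolding nz_cols_def by simp
  then show "K \<le> N" "\<And>j. j < N \<Longrightarrow> col H j = 0\<^sub>v nr \<longleftrightarrow> K \<le> j"
    "\<And>j1 j2. j1 < j2 \<Longrightarrow> j2 < K \<Longrightarrow> piv H j1 < piv H j2"
    "\<And>j. j < K \<Longrightarrow> lead_coeff (H $$ (piv H j, j)) = 1"
    "\<And>j j'. j < K \<Longrightarrow> j' < j \<Longrightarrow>
      H $$ (piv H j, j') = 0 \<or> degree (H $$ (piv H j, j')) < degree (H $$ (piv H j, j))"
    using K0 by auto
qed

lemma H_entry_eq_0_beyond_K: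
  assumes "j < N" "K \<le> j" "r < nr"
  shows "H $$ (r, j) = 0"
proof -
  have "col H j $ r = 0" using col_eq_0_iff[OF assms(1)] assms(2,3) by simp
  then show ?thesis using H_carrier assms by simp
qed

lemma pivot:
  assumes j: "j < K"
  shows "piv H j < nr" "H $$ (piv H j, j) \<noteq> 0" "\<And>r. r < piv H j \<Longrightarrow> H $$ (r, j) = 0"
proof -
  have jN: "j < N" using j K_le by simp
  have "col H j \<noteq> 0\<^sub>v nr" using col_eq_0_iff[OF jN] j by simp
  then obtain r where "r < nr" "col H j $ r \<noteq> 0"
    using H_carrier by (metis carrier_matD(1) dim_col eq_vecI index_zero_vec(1) index_zero_vec(2))
  then have ex: "\<exists>r. r < dim_row H \<and> H $$ (r, j) \<noteq> 0" using H_carrier jN by auto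
  show "piv H j < nr" "H $$ (piv H j, j) \<noteq> 0"
    using LeastI_ex[OF ex] H_carrier unfolding piv_def by auto
  show "H $$ (r, j) = 0" if "r < piv H j" for r
    using not_less_Least[OF that[unfolded piv_def]] that \<open>piv H j < nr\<close> H_carrier by auto
qed

lemma H_mult_vec_index:
  "v \<in> carrier_vec N \<Longrightarrow> r < nr \<Longrightarrow> (H *\<^sub>v v) $ r = (\<Sum>j<N. H $$ (r, j) * v $ j)"
  using H_carrier by (auto simp: scalar_prod_def lessThan_atLeast0 intro!: sum.cong)

lemma H_mult_vec_upto_pivot:
  assumes v: "v \<in> carrier_vec N" and j0: "j0 < K" and z: "\<forall>j<j0. v $ j = 0" and r: "r \<le> piv H j0"
  shows "(H *\<^sub>v v) $ r = (if r = piv H j0 then H $$ (piv H j0, j0) * v $ j0 else 0)"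
proof -
  have rn: "r < nr" using r pivot(1)[OF j0] by simp
  have j0N: "j0 < N" using j0 K_le by simp
  have "H $$ (r, j) * v $ j = (if j = j0 then H $$ (r, j0) * v $ j0 else 0)" if "j < N" for j
  proof -
    have "H $$ (r, j) = 0" if "j0 < j"
    proof (cases "j < K")
      case True
      then show ?thesis using pivot(3)[OF True] piv_strict_mono[OF that True] r by simp
    next
      case False
      then show ?thesis using H_entry_eq_0_beyond_K \<open>j < N\<close> rn by simp
    qed
    then show ?thesis using z by (cases j0 j rule: linorder_cases) auto
  qed
  then have "(H *\<^sub>v v) $ r = (\<Sum>j<N. if j = j0 then H $$ (r, j0) * v $ j0 else 0)"
    unfolding H_mult_vec_index[OF v rn] by (intro sum.cong) auto
  also have "\<dots> = H $$ (r, j0) * v $ j0" using j0N by (simp add: sum.delta')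
  finally show ?thesis using pivot(3)[OF j0, of r] r by auto
qed

lemma H_mult_vec_eq_0:
  assumes v: "v \<in> carrier_vec N" and z: "\<forall>j<K. v $ j = 0"
  shows "H *\<^sub>v v = 0\<^sub>v nr"
proof (rule eq_vecI)
  fix r assume "r < dim_vec (0\<^sub>v nr)"
  then have rn: "r < nr" by simp
  have zero: "H $$ (r, j) * v $ j = 0" if "j < N" for j
    using z H_entry_eq_0_beyond_K[OF that _ rn] by (cases "j < K") auto
  have "(\<Sum>j<N. H $$ (r, j) * v $ j) = 0" by (rule sum.neutral) (simp add: zero)
  then show "(H *\<^sub>v v) $ r = 0\<^sub>v nr $ r" using H_mult_vec_index[OF v rn] rn by simp
qed (use H_carrier in simp)

lemma degree_lead_coeff_H_mult_vec:
  assumes v: "v \<in> carrier_vec N" and j0: "j0 < K" and z: "\<forall>j<j0. v $ j = 0" and nz: "v $ j0 \<noteq> 0"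
  shows "degree (pi_inv nr (H *\<^sub>v v)) = nr - 1 - piv H j0"
    and "lead_coeff (pi_inv nr (H *\<^sub>v v)) = H $$ (piv H j0, j0) * v $ j0"
proof -
  let ?P = "pi_inv nr (H *\<^sub>v v)"
  have pn: "piv H j0 < nr" by (rule pivot(1)[OF j0])
  have top: "coeff ?P (nr - 1 - piv H j0) = H $$ (piv H j0, j0) * v $ j0"
    using pn H_mult_vec_upto_pivot[OF v j0 z, of "piv H j0"] by (simp add: coeff_pi_inv)
  have deg: "degree ?P = nr - 1 - piv H j0"
  proof (rule antisym)
    show "degree ?P \<le> nr - 1 - piv H j0"
    proof (rule degree_le, intro allI impI)
      fix m assume m: "nr - 1 - piv H j0 < m"
      show "coeff ?P m = 0"
      proof (cases "m < nr")
        case True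
        then have "nr - 1 - m < piv H j0" using m by linarith
        then show ?thesis using True H_mult_vec_upto_pivot[OF v j0 z, of "nr - 1 - m"]
          by (simp add: coeff_pi_inv)
      qed (simp add: coeff_pi_inv)
    qed
    show "nr - 1 - piv H j0 \<le> degree ?P"
      using top pivot(2)[OF j0] nz by (intro le_degree) simp
  qed
  then show "degree ?P = nr - 1 - piv H j0" "lead_coeff ?P = H $$ (piv H j0, j0) * v $ j0"
    using top by simp_all
qed

lemma degree_lead_coeff_col:
  assumes j: "j < K"
  shows "degree (pi_inv nr (col H j)) = nr - 1 - piv H j"
    and "lead_coeff (pi_inv nr (col H j)) = H $$ (piv H j, j)"
proof -
  have jN: "j < N" using j K_le by simp
  note unit = degree_lead_coeff_H_mult_vec[OF unit_vec_carrier[of N j] j]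
  show "degree (pi_inv nr (col H j)) = nr - 1 - piv H j"
    "lead_coeff (pi_inv nr (col H j)) = H $$ (piv H j, j)"
    using unit jN by (simp_all add: col_eq_H_mult_unit_vec)
qed

lemma H_mult_vec_eq_0_if_below_pivots:
  assumes v: "v \<in> carrier_vec N" and z: "\<forall>j\<le>j0. v $ j = 0"
    and small: "\<And>j. j0 < j \<Longrightarrow> j < K \<Longrightarrow>
      coeff (pi_inv nr (H *\<^sub>v v)) (nr - 1 - piv H j) = 0 \<or>
      degree (coeff (pi_inv nr (H *\<^sub>v v)) (nr - 1 - piv H j)) < degree (H $$ (piv H j, j))"
  shows "H *\<^sub>v v = 0\<^sub>v nr"
proof (rule H_mult_vec_eq_0[OF v], rule ccontr)
  assume "\<not> (\<forall>j<K. v $ j = 0)"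
  then have "\<exists>j. j < K \<and> v $ j \<noteq> 0" by auto
  then obtain j1 where j1: "j1 < K" "v $ j1 \<noteq> 0" and least: "\<forall>j<j1. \<not> (j < K \<and> v $ j \<noteq> 0)"
    unfolding exists_least_iff[of "\<lambda>j. j < K \<and> v $ j \<noteq> 0"] by blast
  have z1: "\<forall>j<j1. v $ j = 0" using least j1(1) by (meson less_trans)
  have "j0 < j1" using z j1(2) by (meson not_less)
  let ?P = "pi_inv nr (H *\<^sub>v v)" and ?p = "H $$ (piv H j1, j1)"
  note lead = degree_lead_coeff_H_mult_vec[OF v j1(1) z1 j1(2)]
  have c: "coeff ?P (nr - 1 - piv H j1) = ?p * v $ j1" using lead by simp
  have "?p * v $ j1 \<noteq> 0" using pivot(2)[OF j1(1)] j1(2) by simp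
  moreover have "degree ?p \<le> degree (?p * v $ j1)"
    using pivot(2)[OF j1(1)] j1(2) by (simp add: degree_mult_eq)
  ultimately show False using small[OF \<open>j0 < j1\<close> j1(1)] unfolding c by simp
qed

lemma pi_inv_col_in_ideal:
  assumes j: "j < N"
  shows "pi_inv nr (col H j) \<in> ideal_gen F"
proof -
  obtain U V where UV: "U \<in> carrier_mat N N" "H = S_mat F dy D * U" by (rule hnf_transform)
  then have "col H j = S_mat F dy D *\<^sub>v col U j" using S_mat_carrier[of F dy D] j by simp
  then show ?thesis
    unfolding pi_inv_S_mat_mult_vec[OF degF col_carrier_vec] ideal_gen_def using UV(1) j
    by (auto simp: pi_inv_S_mat_mult_vec[OF degF] carrier_vecI)
qed

lemma detach_in_H_range:
  assumes i: "i \<le> n0 G"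
  obtains v where "v \<in> carrier_vec N" "detach G i = pi_inv nr (H *\<^sub>v v)"
proof -
  obtain w where w: "\<forall>j<length F. degree (w j) < D" "detach G i = (\<Sum>j<length F. w j * F ! j)"
    using detach_multipliers_bounded[OF Delta_le i] by blast
  obtain u where u: "u \<in> carrier_vec N" "detach G i = pi_inv nr (S_mat F dy D *\<^sub>v u)"
    using combination_in_S_mat_range[OF degF w(1)] w(2) by auto
  obtain U V where UV: "U \<in> carrier_mat N N" "V \<in> carrier_mat N N" "U * V = 1\<^sub>m N"
    "H = S_mat F dy D * U" by (rule hnf_transform)
  have "H * V = S_mat F dy D * (U * V)"
    unfolding UV(4) using S_mat_carrier UV(1,2) by (rule assoc_mult_mat)
  then have "S_mat F dy D = H * V" using right_mult_one_mat[OF S_mat_carrier[of F dy D]] UV(3) by simp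
  then have "S_mat F dy D *\<^sub>v u = H *\<^sub>v (V *\<^sub>v u)" using H_carrier UV(2) u(1) by simp
  then show ?thesis using that[of "V *\<^sub>v u"] UV(2) u by auto
qed

lemma detach_first_coefficient:
  assumes i: "i \<le> n0 G" and v: "v \<in> carrier_vec N" and A: "detach G i = pi_inv nr (H *\<^sub>v v)"
    and j0: "j0 < K" "v $ j0 \<noteq> 0" and z: "\<forall>j<j0. v $ j = 0"
  shows "piv H j0 = nr - 1 - i" and "i < nr" and "v $ j0 = 1"
proof -
  have degA: "degree (detach G i) = i" and lcA: "lead_coeff (detach G i) = lead_coeff (G ! gb_index i)"
    using detaching_detach[of i] unfolding detaching_def by auto
  note lead = degree_lead_coeff_H_mult_vec[OF v j0(1) z j0(2), folded A]
  have "piv H j0 < nr" by (rule pivot(1)[OF j0(1)])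
  then show piv: "piv H j0 = nr - 1 - i" and "i < nr" using lead(1) degA by linarith+
  let ?p = "H $$ (piv H j0, j0)"
  have p0: "?p \<noteq> 0" by (rule pivot(2)[OF j0(1)])
  have "pi_inv nr (col H j0) \<in> ideal_gen F" using j0(1) K_le by (intro pi_inv_col_in_ideal) simp
  moreover have "degree (pi_inv nr (col H j0)) = i" "lead_coeff (pi_inv nr (col H j0)) = ?p"
    using degree_lead_coeff_col[OF j0(1)] piv \<open>i < nr\<close> by auto
  ultimately have "xdeg (gb_index i) \<le> degree ?p"
    using xdeg_gb_index_le p0 by (metis leading_coeff_0_iff)
  moreover have lcG: "lead_coeff (G ! gb_index i) = ?p * v $ j0" using lcA lead(2) by simp
  then have "xdeg (gb_index i) = degree ?p + degree (v $ j0)"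
    using degree_mult_eq[OF p0 j0(2)] by simp
  ultimately have "degree (v $ j0) = 0" by linarith
  moreover have "lead_coeff (?p * v $ j0) = 1"
    using G_nth(3)[OF gb_index_least(1), of i] unfolding lcoeff_def lcG .
  then have "lead_coeff (v $ j0) = 1" using pivot_monic[OF j0(1)] by (simp add: lead_coeff_mult)
  ultimately show "v $ j0 = 1" by (metis degree_0_id one_pCons)
qed

text \<open>The coefficients of \<open>A\<^sub>i\<close> below \<open>y\<^sup>i\<close> are reduced modulo the Groebner basis, while
  a pivot in \<open>y\<close>-degree \<open>m\<close> is the leading coefficient of an element of \<open>I\<close> of
  \<open>y\<close>-degree \<open>m\<close>.\<close>
lemma detach_coeff_below_pivot:
  assumes j: "j < K" and below: "nr - 1 - piv H j < i"
  shows "coeff (detach G i) (nr - 1 - piv H j) = 0 \<or>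
    degree (coeff (detach G i) (nr - 1 - piv H j)) < degree (H $$ (piv H j, j))"
proof -
  let ?m = "nr - 1 - piv H j" and ?p = "H $$ (piv H j, j)"
  let ?c = "coeff (detach G i) ?m"
  have "pi_inv nr (col H j) \<in> ideal_gen F" using j K_le by (intro pi_inv_col_in_ideal) simp
  moreover have "degree (pi_inv nr (col H j)) = ?m" "lead_coeff (pi_inv nr (col H j)) = ?p"
    using degree_lead_coeff_col[OF j] by auto
  ultimately have pivot_bound: "xdeg (gb_index ?m) \<le> degree ?p"
    using xdeg_gb_index_le pivot(2)[OF j] by (metis leading_coeff_0_iff)
  have "degree ?c < xdeg (gb_index ?m)" if "?c \<noteq> 0"
  proof (rule irreducible_xdeg_less)
    from that have "(?m, degree ?c) \<in> monomials (detach G i)" unfolding monomials_def by simp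
    then show "\<not> reducible G (?m, degree ?c)"
      using detaching_detach[of i] below unfolding detaching_def by blast
  qed
  then show ?thesis using pivot_bound by fastforce
qed

lemma detach_eq_col:
  assumes i: "i \<le> n0 G"
  obtains j0 where "j0 < K" "piv H j0 = nr - 1 - i" "i < nr" "detach G i = pi_inv nr (col H j0)"
proof -
  let ?A = "detach G i"
  obtain v where v: "v \<in> carrier_vec N" "?A = pi_inv nr (H *\<^sub>v v)"
    using detach_in_H_range[OF i] by blast
  have "lead_coeff ?A = lead_coeff (G ! gb_index i)"
    using detaching_detach[of i] unfolding detaching_def by blast
  moreover have "lead_coeff (G ! gb_index i) \<noteq> 0" using G_nth(1)[OF gb_index_least(1)] by simp
  ultimately have "?A \<noteq> 0" by auto
  have "H *\<^sub>v v \<noteq> 0\<^sub>v nr"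
  proof
    assume "H *\<^sub>v v = 0\<^sub>v nr"
    then have "?A = 0" using v(2) by (auto intro!: poly_eqI simp: coeff_pi_inv)
    with \<open>?A \<noteq> 0\<close> show False ..
  qed
  then have "\<exists>j. j < K \<and> v $ j \<noteq> 0" using H_mult_vec_eq_0[OF v(1)] by blast
  then obtain j0 where j0: "j0 < K" "v $ j0 \<noteq> 0" and least: "\<forall>j<j0. \<not> (j < K \<and> v $ j \<noteq> 0)"
    unfolding exists_least_iff[of "\<lambda>j. j < K \<and> v $ j \<noteq> 0"] by blast
  have z: "\<forall>j<j0. v $ j = 0" using least j0(1) by (meson less_trans)
  note first = detach_first_coefficient[OF i v j0 z]
  have j0N: "j0 < N" using j0(1) K_le by simp
  let ?v' = "v - unit_vec N j0"
  have v': "?v' \<in> carrier_vec N" using v(1) by simp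
  have Hv': "H *\<^sub>v ?v' = H *\<^sub>v v - col H j0"
    using H_carrier v(1) j0N by (simp add: mult_minus_distrib_mat_vec col_eq_H_mult_unit_vec)
  have "H *\<^sub>v ?v' = 0\<^sub>v nr"
  proof (rule H_mult_vec_eq_0_if_below_pivots[OF v'])
    show "\<forall>j\<le>j0. ?v' $ j = 0" using z first(3) v(1) j0N by auto
  next
    fix j assume j: "j0 < j" "j < K"
    have "piv H j0 < piv H j" "piv H j < nr" using piv_strict_mono[OF j] pivot(1)[OF j(2)] by auto
    then have below: "nr - 1 - piv H j < i" using first(1,2) by linarith
    have "coeff (pi_inv nr (H *\<^sub>v ?v')) (nr - 1 - piv H j) =
        coeff ?A (nr - 1 - piv H j) - H $$ (piv H j, j0)"
      unfolding Hv' v(2) using H_carrier v(1) j0N \<open>piv H j < nr\<close>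
      by (simp add: pi_inv_minus coeff_pi_inv)
    then show "coeff (pi_inv nr (H *\<^sub>v ?v')) (nr - 1 - piv H j) = 0 \<or>
      degree (coeff (pi_inv nr (H *\<^sub>v ?v')) (nr - 1 - piv H j)) < degree (H $$ (piv H j, j))"
      using degree_diff_less[OF detach_coeff_below_pivot[OF j(2) below] pivot_row_reduced[OF j(2,1)]]
      by simp
  qed
  then have diff: "H *\<^sub>v v - col H j0 = 0\<^sub>v nr" unfolding Hv' .
  have "H *\<^sub>v v = col H j0"
  proof (rule eq_vecI)
    fix r assume "r < dim_vec (col H j0)"
    then show "(H *\<^sub>v v) $ r = col H j0 $ r"
      using arg_cong[OF diff, of "\<lambda>w. w $ r"] H_carrier by simp
  qed (use H_carrier in simp)
  then show ?thesis using that j0(1) first(1,2) v(2) by simp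
qed

text \<open>The \<open>y\<close>-degrees of \<open>A\<^sub>0, \<dots>, A\<^sub>n\<^sub>0\<close> decrease from the last column to the left while the
  pivots increase, so the columns they occupy are consecutive.\<close>
lemma detach_eq_col_from_right:
  assumes "i \<le> n0 G"
  shows "i < K \<and> piv H (K - 1 - i) = nr - 1 - i \<and> detach G i = pi_inv nr (col H (K - 1 - i))"
  using assms
proof (induction i)
  case 0
  obtain j where j: "j < K" "piv H j = nr - 1" "detach G 0 = pi_inv nr (col H j)"
    using detach_eq_col[OF "0"] by auto
  have "j = K - 1"
  proof (rule ccontr)
    assume "j \<noteq> K - 1"
    then have "piv H j < piv H (K - 1)" using j(1) by (intro piv_strict_mono) auto
    moreover have "piv H (K - 1) < nr" using j(1) by (intro pivot(1)) auto
    ultimately show False using j(2) by linarith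
  qed
  then show ?case using j by auto
next
  case (Suc i)
  then have IH: "i < K" "piv H (K - 1 - i) = nr - 1 - i" by auto
  obtain j where j: "j < K" "piv H j = nr - 1 - Suc i" "Suc i < nr"
    "detach G (Suc i) = pi_inv nr (col H j)"
    using detach_eq_col[OF Suc.prems] by blast
  have "j < K - 1 - i"
  proof (rule ccontr)
    assume "\<not> ?thesis"
    then consider "j = K - 1 - i" | "K - 1 - i < j" by linarith
    then show False
    proof cases
      case 1
      then show False using j(2,3) IH(2) by simp
    next
      case 2
      then have "piv H (K - 1 - i) < piv H j" using j(1) by (intro piv_strict_mono)
      then show False using j(2,3) IH(2) by linarith
    qed
  qed
  moreover have "\<not> j < K - 1 - Suc i"
  proof
    assume a: "j < K - 1 - Suc i"
    then have "piv H j < piv H (K - 1 - Suc i)" "piv H (K - 1 - Suc i) < piv H (K - 1 - i)"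
      using IH(1) by (auto intro!: piv_strict_mono)
    then show False using j(2,3) IH(2) by linarith
  qed
  ultimately have "j = K - 1 - Suc i" by linarith
  then show ?case using j \<open>j < K - 1 - i\<close> by auto
qed

lemma lead_coeff_detach_eq_1_iff: "i \<le> n0 G \<Longrightarrow> lead_coeff (detach G i) = 1 \<longleftrightarrow> i = n0 G"
proof -
  assume i: "i \<le> n0 G"
  have lc: "lead_coeff (detach G i) = lead_coeff (G ! gb_index i)"
    using detaching_detach[of i] unfolding detaching_def by blast
  show ?thesis
  proof
    assume "lead_coeff (detach G i) = 1"
    then have "gb_index i = 0" using lc lead_coeff_G_neq_1 gb_index_least(1) by (metis not_gr0)
    then show "i = n0 G" using gb_index_least(2)[of i] i unfolding n0_def by simp
  next
    assume "i = n0 G"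
    then have "gb_index i = 0" using G_ne gb_index_eq[of 0] unfolding n0_def by simp
    then show "lead_coeff (detach G i) = 1" using lc lead_coeff_G0 by simp
  qed
qed

end

lemma map_rev_upt_eq:
  assumes "n \<le> K"
  shows "map f (rev [K - n..<K + 1]) = map (\<lambda>i. f (K - i)) [0..<n + 1]"
proof (rule nth_equalityI)
  have len: "length [K - n..<K + 1] = n + 1" using assms by simp
  then show "length (map f (rev [K - n..<K + 1])) = length (map (\<lambda>i. f (K - i)) [0..<n + 1])"
    by simp
  fix l assume "l < length (map f (rev [K - n..<K + 1]))"
  then have l: "l \<le> n" using len by simp
  have "rev [K - n..<K + 1] ! l = [K - n..<K + 1] ! (n - l)"
    using l len by (simp add: rev_nth del: upt_Suc)
  also have "\<dots> = K - l" using l assms by (simp del: upt_Suc)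
  finally show "map f (rev [K - n..<K + 1]) ! l = map (\<lambda>i. f (K - i)) [0..<n + 1] ! l"
    using l len by (simp del: upt_Suc)
qed

theorem proposition1:
  fixes F G :: "'a::field bipoly list" and dy D :: nat and H :: "'a poly mat"
  assumes "length F \<ge> 2"
    and "\<forall>f\<in>set F. degree f \<le> dy"
    and "zero_dim (ideal_gen F)"
    and "reduced_lex_GB G (ideal_gen F)"
    and "D \<ge> Delta F G"
    and "hermite_nf (S_mat F dy D) H"
  shows "let K = nz_cols H;
             c = (\<lambda>k. pi_inv (dy + D) (col H (k - 1)));
             K' = (GREATEST k. 1 \<le> k \<and> k \<le> K \<and> lead_coeff (c k) = 1)
         in (\<exists>k. 1 \<le> k \<and> k \<le> K \<and> lead_coeff (c k) = 1) \<and>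
            map c (rev [K'..<K+1]) = map (detach G) [nS G..<n0 G + 1] \<and>
            (\<forall>i\<le>n0 G. c (K - i) = detach G i)"
proof -
  interpret detach_hnf F G dy D H
    using assms by unfold_locales auto
  define c where "c = (\<lambda>k. pi_inv (dy + D) (col H (k - 1)))"
  let ?n = "n0 G"
  have c: "c (K - i) = detach G i" if "i \<le> ?n" for i
    using detach_eq_col_from_right[OF that] unfolding c_def by (simp add: diff_commute)
  have n: "?n < K" using detach_eq_col_from_right[of ?n] by simp
  have monic: "lead_coeff (c (K - i)) = 1 \<longleftrightarrow> i = ?n" if "i \<le> ?n" for i
    using c[OF that] lead_coeff_detach_eq_1_iff[OF that] by simp
  have K': "(GREATEST k. 1 \<le> k \<and> k \<le> K \<and> lead_coeff (c k) = 1) = K - ?n"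
  proof (rule Greatest_equality)
    show "1 \<le> K - ?n \<and> K - ?n \<le> K \<and> lead_coeff (c (K - ?n)) = 1" using n monic by simp
    fix k assume k: "1 \<le> k \<and> k \<le> K \<and> lead_coeff (c k) = 1"
    show "k \<le> K - ?n"
    proof (rule ccontr)
      assume "\<not> k \<le> K - ?n"
      then have "K - k < ?n" "K - (K - k) = k" using k n by auto
      then show False using monic[of "K - k"] k by simp
    qed
  qed
  have "map c (rev [K - ?n..<K + 1]) = map (detach G) [nS G..<?n + 1]"
    unfolding map_rev_upt_eq[OF less_imp_le[OF n]] nS_eq_0 using c by simp
  moreover have "\<exists>k. 1 \<le> k \<and> k \<le> K \<and> lead_coeff (c k) = 1"
    using n monic[of ?n] by (intro exI[of _ "K - ?n"]) auto
  ultimately show ?thesis unfolding Let_def c_def[symmetric] K' using c by blast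
qed

end
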